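(* Let $\mathcal{H}$ be a convex polytope contained in the simplex $\Delta_{S-1}$, represented as the convex hull of a finite set of vertices $\{\boldsymbol{g}_1,\ldots,\boldsymbol{g}_N\}$, where each $\boldsymbol{g}_i\in\Delta_{S-1}\subset\mathbb{R}^S$ is distinct, and let $G=(\boldsymbol{g}_1,\ldots,\boldsymbol{g}_N)\in\mathbb{R}^{S\times N}$. Suppose the model class $\mathcal{F}\subset L_2(Q_{\boldsymbol{X}})$ is convex and contains $\tau^{(s)}$ for all $s\in\{1,\ldots,S\}$. Let \[ f^*_{\operatorname{regret},\mathcal{H}}=\underset{f\in\mathcal{F}}{\arg\min}\ \max_{Q\in\mathcal{C}(Q_{\boldsymbol{X}},\mathcal{H})}\Big\{\mathbb{E}_Q\big[(Y(1)-Y(0)-f(\boldsymbol{X}))^2\big]-\min_{f'\in\mathcal{F}}\mathbb{E}_Q\big[(Y(1)-Y(0)-f'(\boldsymbol{X}))^2\big]\Big\} \] be the minimax regret CATE over $\mathcal{C}(Q_{\boldsymbol{X}},\mathcal{H})$. Then \[ f^*_{\operatorname{regret},\mathcal{H}}(\cdot)=(\boldsymbol{q}^* )^\top\boldsymbol{\tau}_{\operatorname{poly}}(\cdot)\quad\text{with}\quad \boldsymbol{q}^*=\underset{\boldsymbol{q}\in\Delta_{N-1}}{\arg\min}\ \big(\boldsymbol{q}^\top\Gamma_{\operatorname{poly}}\boldsymbol{q}-\boldsymbol{q}^\top\boldsymbol{d}_{\operatorname{poly}}\big), \] where $\boldsymbol{\tau}(\cdot)=(\tau^{(1)}(\cdot),\ldots,\tau^{(S)}(\cdot))^\top$,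 $\boldsymbol{\tau}_{\operatorname{poly}}(\cdot)=G^\top\boldsymbol{\tau}(\cdot)$, $\Gamma_{\operatorname{poly}}=G^\top\Gamma G$ with $\Gamma_{k,l}=\mathbb{E}_{Q_{\boldsymbol{X}}}[\tau^{(k)}(\boldsymbol{X})\tau^{(l)}(\boldsymbol{X})]$, and \[ \boldsymbol{d}_{\operatorname{poly}}=\Big(\mathbb{E}_{Q_{\boldsymbol{X}}}\big[(\boldsymbol{g}_1^\top\boldsymbol{\tau}(\boldsymbol{X}))^2\big],\ldots,\mathbb{E}_{Q_{\boldsymbol{X}}}\big[(\boldsymbol{g}_N^\top\boldsymbol{\tau}(\boldsymbol{X}))^2\big]\Big)^\top \] is the diagonal vector of $\Gamma_{\operatorname{poly}}$.
   Context: Setting: there are $S$ source sites; site $s$ has a joint distribution $P^{(s)}$ of potential outcomes $(Y(1),Y(0))$ (real-valued) and covariates $\boldsymbol{X}\in\mathcal{X}$, with site-specific conditional average treatment effect (CATE) $\tau^{(s)}(\boldsymbol{x})=\mathbb{E}_{P^{(s)}}[Y(1)-Y(0)\mid \boldsymbol{X}=\boldsymbol{x}]$. $Q_{\boldsymbol{X}}$ is a target covariate distribution on $\mathcal{X}$ and $L_2(Q_{\boldsymbol{X}})$ the square-integrable functions w.r.t. it. For a joint distribution $Q$ of $(Y(1),Y(0),\boldsymbol{X})$, $\tau_Q(\boldsymbol{x})=\mathbb{E}_Q[Y(1)-Y(0)\mid\boldsymbol{X}=\boldsymbol{x}]$. $\Delta_{m-1}=\{\boldsymbol{q}\in\mathbb{R}^m:\sum_i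 q_i=1,\ \min_i q_i\ge 0\}$. For a convex set $\mathcal{H}\subseteq\Delta_{S-1}$, the restricted uncertainty set is $\mathcal{C}(Q_{\boldsymbol{X}},\mathcal{H})=\{Q=(Q_{\boldsymbol{X}},Q_{(Y(1),Y(0))\mid\boldsymbol{X}}):\ \tau_Q(\cdot)=\sum_{s=1}^S q_s\tau^{(s)}(\cdot)\text{ for some }\boldsymbol{q}\in\mathcal{H}\}$. *)

theory Defs
  imports "HOL-Analysis.Analysis" "HOL-Probability.Probability"
begin

definition prob_simplex :: "(real^'m::finite) set" where
  "prob_simplex = {q. (\<forall>i. 0 \<le> q $ i) \<and> (\<Sum>i\<in>UNIV. q $ i) = 1}"

definition L2 :: "'x measure \<Rightarrow> ('x \<Rightarrow> real) set" where
  "L2 M = {f. f \<in> borel_measurable M \<and> integrable M (\<lambda>x. (f x)\<^sup>2)}"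

definition convex_fun_set :: "('x \<Rightarrow> real) set \<Rightarrow> bool" where
  "convex_fun_set F \<longleftrightarrow>
     (\<forall>f\<in>F. \<forall>h\<in>F. \<forall>t::real. 0 \<le> t \<and> t \<le> 1 \<longrightarrow> (\<lambda>x. t * f x + (1 - t) * h x) \<in> F)"

text \<open>Joint distributions Q of ((Y(1),Y(0)),X) are measures on (R x R) x X.
  Treatment effect Y(1)-Y(0) of an outcome point:\<close>
definition te :: "(real \<times> real) \<times> 'x \<Rightarrow> real" where
  "te \<omega> = fst (fst \<omega>) - snd (fst \<omega>)"

text \<open>Q is a joint distribution with X-marginal QX, square-integrable treatment effect,
  and CATE E_Q[Y(1)-Y(0) | X] equal to tf (stated by the defining property of
  conditional expectation).\<close>
definition has_cate :: "'x measure \<Rightarrow> ((real \<times> real) \<times> 'x) measure \<Rightarrow> ('x \<Rightarrow> real) \<Rightarrow> bool" where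
  "has_cate QX Q tf \<longleftrightarrow>
     sets Q = sets ((borel \<Otimes>\<^sub>M borel) \<Otimes>\<^sub>M QX) \<and> prob_space Q \<and>
     distr Q QX snd = QX \<and>
     integrable Q (\<lambda>\<omega>. (te \<omega>)\<^sup>2) \<and> integrable Q te \<and>
     tf \<in> borel_measurable QX \<and> integrable QX tf \<and>
     (\<forall>A\<in>sets QX. (\<integral>\<omega>. indicator (snd -` A \<inter> space Q) \<omega> * te \<omega> \<partial>Q)
                   = (\<integral>x. indicator A x * tf x \<partial>QX))"

definition unc_set :: "'x measure \<Rightarrow> ('s::finite \<Rightarrow> 'x \<Rightarrow> real) \<Rightarrow> (real^'s) set
     \<Rightarrow> ((real \<times> real) \<times> 'x) measure set" where
  "unc_set QX tau H = {Q. \<exists>q\<in>H. has_cate QX Q (\<lambda>x. \<Sum>s\<in>UNIV. q $ s * tau s x)}"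

definition sq_risk :: "((real \<times> real) \<times> 'x) measure \<Rightarrow> ('x \<Rightarrow> real) \<Rightarrow> real" where
  "sq_risk Q f = (\<integral>\<omega>. (te \<omega> - f (snd \<omega>))\<^sup>2 \<partial>Q)"

definition regret :: "('x \<Rightarrow> real) set \<Rightarrow> ((real \<times> real) \<times> 'x) measure \<Rightarrow> ('x \<Rightarrow> real) \<Rightarrow> real" where
  "regret F Q f = sq_risk Q f - (INF f'\<in>F. sq_risk Q f')"

definition worst_regret :: "'x measure \<Rightarrow> ('s::finite \<Rightarrow> 'x \<Rightarrow> real) \<Rightarrow> (real^'s) set
     \<Rightarrow> ('x \<Rightarrow> real) set \<Rightarrow> ('x \<Rightarrow> real) \<Rightarrow> real" where
  "worst_regret QX tau H F f = (SUP Q\<in>unc_set QX tau H. regret F Q f)"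

definition tau_vec :: "('s::finite \<Rightarrow> 'x \<Rightarrow> real) \<Rightarrow> 'x \<Rightarrow> real^'s" where
  "tau_vec tau x = (\<chi> s. tau s x)"

definition Gamma :: "'x measure \<Rightarrow> ('s::finite \<Rightarrow> 'x \<Rightarrow> real) \<Rightarrow> real^'s^'s" where
  "Gamma QX tau = (\<chi> k l. \<integral>x. tau k x * tau l x \<partial>QX)"

definition Gmat :: "('n::finite \<Rightarrow> real^'s::finite) \<Rightarrow> real^'n^'s" where
  "Gmat g = (\<chi> s i. g i $ s)"

definition Gamma_poly :: "'x measure \<Rightarrow> ('s::finite \<Rightarrow> 'x \<Rightarrow> real) \<Rightarrow> ('n::finite \<Rightarrow> real^'s) \<Rightarrow> real^'n^'n" where
  "Gamma_poly QX tau g = transpose (Gmat g) ** Gamma QX tau ** Gmat g"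

definition d_poly :: "'x measure \<Rightarrow> ('s::finite \<Rightarrow> 'x \<Rightarrow> real) \<Rightarrow> ('n::finite \<Rightarrow> real^'s) \<Rightarrow> real^'n" where
  "d_poly QX tau g = (\<chi> i. \<integral>x. (g i \<bullet> tau_vec tau x)\<^sup>2 \<partial>QX)"

definition tau_poly :: "('s::finite \<Rightarrow> 'x \<Rightarrow> real) \<Rightarrow> ('n::finite \<Rightarrow> real^'s) \<Rightarrow> 'x \<Rightarrow> real^'n" where
  "tau_poly tau g x = transpose (Gmat g) *v tau_vec tau x"

end

theory Submission
  imports Defs
begin

text \<open>If the CATE tf of a joint law Q lies in F, the regret of f \<in> F under Q is the squared
  L2(QX) distance of f to tf, since the noise Y(1) - Y(0) - tf X is orthogonal to all functions
  of X. The CATEs allowed by the polytope are the mixtures h_w = \<Sum>j w_j h_j of the vertex CATEs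
  h_j = g_j\<bullet>\<tau>, and the bias-variance identity
  \<Sum>j w_j |f - h_j|^2 = |f - h_w|^2 + V(w),  V(w) = \<Sum>j w_j |h_w - h_j|^2,
  shows that the worst-case regret of f is max_j |f - h_j|^2. The quadratic programme minimises
  -V, and first-order optimality at its solution q* gives |h_q* - h_j|^2 \<le> V(q*) for every j.
  Hence the worst-case regret of h_q* is at most V(q*), while that of any f is at least
  \<Sum>j q*_j |f - h_j|^2 = |f - h_q*|^2 + V(q*).\<close>

lemma L2_D:
  assumes "f \<in> L2 M"
  shows "f \<in> borel_measurable M" "integrable M (\<lambda>x. (f x)\<^sup>2)"
  using assms by (simp_all add: L2_def)

lemma integrable_mult_L2:
  assumes "f \<in> L2 M" "g \<in> L2 M"
  shows "integrable M (\<lambda>x. f x * g x)"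
proof (rule Bochner_Integration.integrable_bound)
  show "integrable M (\<lambda>x. (f x)\<^sup>2 + (g x)\<^sup>2)"
    using L2_D(2)[OF assms(1)] L2_D(2)[OF assms(2)] by simp
  have "\<bar>f x * g x\<bar> \<le> (f x)\<^sup>2 + (g x)\<^sup>2" for x
  proof -
    have "2 * \<bar>f x * g x\<bar> \<le> (f x)\<^sup>2 + (g x)\<^sup>2"
      using sum_squares_bound[of "\<bar>f x\<bar>" "\<bar>g x\<bar>"] by (simp add: abs_mult mult.assoc)
    then show ?thesis by linarith
  qed
  then show "AE x in M. norm (f x * g x) \<le> norm ((f x)\<^sup>2 + (g x)\<^sup>2)" by simp
qed (use L2_D(1)[OF assms(1)] L2_D(1)[OF assms(2)] in simp)

lemma L2_add:
  assumes "f \<in> L2 M" "g \<in> L2 M"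
  shows "(\<lambda>x. f x + g x) \<in> L2 M"
proof -
  have "integrable M (\<lambda>x. (f x)\<^sup>2 + (g x)\<^sup>2 + 2 * (f x * g x))"
    using assms integrable_mult_L2[OF assms] by (simp add: L2_def)
  then show ?thesis
    using assms by (auto simp: L2_def power2_sum mult.assoc)
qed

lemma L2_cmult: "f \<in> L2 M \<Longrightarrow> (\<lambda>x. c * f x) \<in> L2 M"
  by (auto simp: L2_def power_mult_distrib)

lemma L2_diff: "f \<in> L2 M \<Longrightarrow> g \<in> L2 M \<Longrightarrow> (\<lambda>x. f x - g x) \<in> L2 M"
  using L2_add[of f M "\<lambda>x. -1 * g x"] L2_cmult[of g M "-1"] by simp

lemma L2_const_zero: "(\<lambda>x. 0) \<in> L2 M"
  by (simp add: L2_def)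

lemma L2_sum: "(\<And>i. i \<in> A \<Longrightarrow> f i \<in> L2 M) \<Longrightarrow> (\<lambda>x. \<Sum>i\<in>A. f i x) \<in> L2 M"
proof (induction A rule: infinite_finite_induct)
  case (insert a A)
  then show ?case using L2_add[of "f a" M "\<lambda>x. \<Sum>i\<in>A. f i x"] by simp
qed (simp_all add: L2_const_zero)

lemma L2_comp_distr:
  assumes [measurable]: "X \<in> measurable N M" and "distr N M X = M" and "k \<in> L2 M"
  shows "(\<lambda>\<omega>. k (X \<omega>)) \<in> L2 N"
proof -
  have [measurable]: "k \<in> borel_measurable M" using L2_D[OF assms(3)] by simp
  have "integrable (distr N M X) (\<lambda>x. (k x)\<^sup>2)" using assms L2_D by simp
  then show ?thesis by (simp add: L2_def integrable_distr_eq)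
qed

definition L2_sqdist :: "'x measure \<Rightarrow> ('x \<Rightarrow> real) \<Rightarrow> ('x \<Rightarrow> real) \<Rightarrow> real" where
  "L2_sqdist M f g = (\<integral>x. (f x - g x)\<^sup>2 \<partial>M)"

lemma L2_sqdist_nonneg: "0 \<le> L2_sqdist M f g"
  by (simp add: L2_sqdist_def)

lemma AE_eq_if_L2_sqdist_eq_0:
  assumes "f \<in> L2 M" "g \<in> L2 M" "L2_sqdist M f g = 0"
  shows "AE x in M. f x = g x"
proof -
  have "integrable M (\<lambda>x. (f x - g x)\<^sup>2)" using L2_D(2)[OF L2_diff[OF assms(1,2)]] .
  then have "AE x in M. (f x - g x)\<^sup>2 = 0"
    using assms(3) integral_nonneg_eq_0_iff_AE[of M "\<lambda>x. (f x - g x)\<^sup>2"]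
    by (simp add: L2_sqdist_def)
  then show ?thesis by (rule eventually_mono) simp
qed

lemma has_cateD:
  assumes "has_cate QX Q tf"
  shows "prob_space Q" "snd \<in> measurable Q QX" "distr Q QX snd = QX" "te \<in> L2 Q"
    "integrable Q te" "integrable QX tf" "tf \<in> borel_measurable QX"
    "\<And>A. A \<in> sets QX \<Longrightarrow>
       (\<integral>\<omega>. indicator (snd -` A \<inter> space Q) \<omega> * te \<omega> \<partial>Q) = (\<integral>x. indicator A x * tf x \<partial>QX)"
proof -
  have sets: "sets Q = sets ((borel \<Otimes>\<^sub>M borel) \<Otimes>\<^sub>M QX)"
    using assms by (simp add: has_cate_def)
  show "snd \<in> measurable Q QX"
    using measurable_cong_sets[OF sets refl] measurable_snd by blast
  have "te \<in> borel_measurable Q"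
    unfolding te_def[abs_def] measurable_cong_sets[OF sets refl] by measurable
  then show "te \<in> L2 Q"
    using assms by (simp add: has_cate_def L2_def)
qed (use assms in \<open>simp_all add: has_cate_def\<close>)

lemma has_cate_integral_mult:
  assumes hc: "has_cate QX Q tf" and k: "k \<in> L2 QX"
  shows "(\<integral>\<omega>. k (snd \<omega>) * te \<omega> \<partial>Q) = (\<integral>x. k x * tf x \<partial>QX)"
proof -
  note cate = has_cateD[OF hc]
  interpret prob_space Q by (rule cate(1))
  have [measurable]: "snd \<in> measurable Q QX" "tf \<in> borel_measurable QX" "k \<in> borel_measurable QX"
    "te \<in> borel_measurable Q"
    using cate L2_D[OF k] L2_D[OF cate(4)] by simp_all
  define Fs where "Fs = vimage_algebra (space Q) snd QX"
  have snd_space: "snd \<in> space Q \<rightarrow> space QX" using measurable_space[of snd Q QX] by simp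
  interpret finite_measure_subalgebra Q Fs
    by unfold_locales (simp add: subalgebra_def Fs_def sets_image_in_sets)
  have [measurable]: "snd \<in> measurable Fs QX"
    unfolding Fs_def by (rule measurable_vimage_algebra1[OF snd_space])
  have cond_exp: "AE \<omega> in Q. real_cond_exp Q Fs te \<omega> = tf (snd \<omega>)"
  proof (rule real_cond_exp_charact)
    fix A assume "A \<in> sets Fs"
    then obtain B where B: "B \<in> sets QX" and A: "A = snd -` B \<inter> space Q"
      unfolding Fs_def sets_vimage_algebra2[OF snd_space] by blast
    have "(\<integral>\<omega>. indicator A \<omega> * tf (snd \<omega>) \<partial>Q) = (\<integral>\<omega>. indicator B (snd \<omega>) * tf (snd \<omega>) \<partial>Q)"
      by (rule Bochner_Integration.integral_cong) (auto simp: A indicator_def)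
    also have "\<dots> = (\<integral>x. indicator B x * tf x \<partial>QX)"
      using integral_distr[of snd Q QX "\<lambda>x. indicator B x * tf x"] B cate(3) by simp
    also have "\<dots> = (\<integral>\<omega>. indicator A \<omega> * te \<omega> \<partial>Q)"
      using cate(8)[OF B] A by simp
    finally show "(\<integral>\<omega>\<in>A. te \<omega> \<partial>Q) = (\<integral>\<omega>\<in>A. tf (snd \<omega>) \<partial>Q)"
      unfolding set_lebesgue_integral_def by simp
  qed (use cate integrable_distr_eq[of snd Q QX tf] in auto)
  have "integrable Q (\<lambda>\<omega>. k (snd \<omega>) * te \<omega>)"
    using integrable_mult_L2 L2_comp_distr[OF _ cate(3) k] cate(4) by simp
  then have "(\<integral>\<omega>. k (snd \<omega>) * te \<omega> \<partial>Q) = (\<integral>\<omega>. k (snd \<omega>) * real_cond_exp Q Fs te \<omega> \<partial>Q)"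
    using real_cond_exp_intg(2)[of "\<lambda>\<omega>. k (snd \<omega>)" te] by simp
  also have "\<dots> = (\<integral>\<omega>. k (snd \<omega>) * tf (snd \<omega>) \<partial>Q)"
    by (rule integral_cong_AE) (use cond_exp in auto)
  also have "\<dots> = (\<integral>x. k x * tf x \<partial>QX)"
    using integral_distr[of snd Q QX "\<lambda>x. k x * tf x"] cate(3) by simp
  finally show ?thesis .
qed

lemma sq_risk_eq_noise_plus_L2_sqdist:
  assumes hc: "has_cate QX Q tf" and tf: "tf \<in> L2 QX" and f: "f \<in> L2 QX"
  shows "sq_risk Q f = sq_risk Q tf + L2_sqdist QX f tf"
proof -
  note cate = has_cateD[OF hc]
  define k where "k = (\<lambda>x. tf x - f x)"
  have k: "k \<in> L2 QX" unfolding k_def by (rule L2_diff[OF tf f])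
  have kQ: "(\<lambda>\<omega>. k (snd \<omega>)) \<in> L2 Q" and tfQ: "(\<lambda>\<omega>. tf (snd \<omega>)) \<in> L2 Q"
    using L2_comp_distr[OF cate(2,3)] k tf by auto
  have [measurable]: "snd \<in> measurable Q QX" "k \<in> borel_measurable QX" "tf \<in> borel_measurable QX"
    using cate L2_D k tf by simp_all
  have "(\<lambda>\<omega>. (te \<omega> - f (snd \<omega>))\<^sup>2) = (\<lambda>\<omega>. (te \<omega> - tf (snd \<omega>))\<^sup>2 + 2 * (k (snd \<omega>) * te \<omega>)
      - 2 * (k (snd \<omega>) * tf (snd \<omega>)) + (k (snd \<omega>))\<^sup>2)"
    unfolding k_def by (simp add: fun_eq_iff power2_eq_square algebra_simps)
  then have "sq_risk Q f = sq_risk Q tf + 2 * (\<integral>\<omega>. k (snd \<omega>) * te \<omega> \<partial>Q)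
      - 2 * (\<integral>\<omega>. k (snd \<omega>) * tf (snd \<omega>) \<partial>Q) + (\<integral>\<omega>. (k (snd \<omega>))\<^sup>2 \<partial>Q)"
    unfolding sq_risk_def
    using L2_D(2)[OF L2_diff[OF cate(4) tfQ]] L2_D(2)[OF kQ]
      integrable_mult_L2[OF kQ cate(4)] integrable_mult_L2[OF kQ tfQ]
    by simp
  also have "\<dots> = sq_risk Q tf + (\<integral>x. (k x)\<^sup>2 \<partial>QX)"
    using has_cate_integral_mult[OF hc k] cate(3)
      integral_distr[of snd Q QX "\<lambda>x. k x * tf x"] integral_distr[of snd Q QX "\<lambda>x. (k x)\<^sup>2"]
    by simp
  also have "(\<integral>x. (k x)\<^sup>2 \<partial>QX) = L2_sqdist QX f tf"
    unfolding L2_sqdist_def k_def by (simp add: power2_commute)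
  finally show ?thesis .
qed

lemma regret_eq_L2_sqdist:
  assumes "has_cate QX Q tf" "tf \<in> F" "F \<subseteq> L2 QX" "f \<in> F"
  shows "regret F Q f = L2_sqdist QX f tf"
proof -
  have risk: "sq_risk Q h = sq_risk Q tf + L2_sqdist QX h tf" if "h \<in> F" for h
    using sq_risk_eq_noise_plus_L2_sqdist[OF assms(1)] assms(2,3) that by blast
  have min: "sq_risk Q tf \<le> sq_risk Q h" if "h \<in> F" for h
    using risk[OF that] L2_sqdist_nonneg[of QX h tf] by linarith
  have "(INF h\<in>F. sq_risk Q h) = sq_risk Q tf"
  proof (rule antisym)
    have "bdd_below (sq_risk Q ` F)"
      using min by (intro bdd_belowI2)
    then show "(INF h\<in>F. sq_risk Q h) \<le> sq_risk Q tf"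
      using assms(2) by (rule cINF_lower)
    show "sq_risk Q tf \<le> (INF h\<in>F. sq_risk Q h)"
      using min assms(2) by (intro cINF_greatest) auto
  qed
  then show ?thesis
    unfolding regret_def using risk[OF assms(4)] by simp
qed

text \<open>The witness has Y(1) = tf X and Y(0) = 0.\<close>
lemma ex_has_cate:
  assumes "prob_space QX" and tf: "tf \<in> L2 QX"
  shows "\<exists>Q. has_cate QX Q tf"
proof -
  interpret prob_space QX by fact
  define PX where "PX = ((borel::real measure) \<Otimes>\<^sub>M (borel::real measure)) \<Otimes>\<^sub>M QX"
  define \<phi> where "\<phi> = (\<lambda>x. ((tf x, 0::real), x))"
  have [measurable]: "tf \<in> borel_measurable QX" using L2_D[OF tf] by simp
  have \<phi>_measurable[measurable]: "\<phi> \<in> measurable QX PX" and [measurable]: "te \<in> borel_measurable PX"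
    and snd_measurable[measurable]: "snd \<in> measurable PX QX"
    unfolding \<phi>_def PX_def te_def[abs_def] by measurable
  have te_\<phi>: "te (\<phi> x) = tf x" "snd (\<phi> x) = x" for x
    by (simp_all add: \<phi>_def te_def)
  define Q where "Q = distr QX PX \<phi>"
  have "has_cate QX Q tf"
    unfolding has_cate_def
  proof (intro conjI ballI)
    show "sets Q = sets ((borel \<Otimes>\<^sub>M borel) \<Otimes>\<^sub>M QX)"
      unfolding Q_def PX_def by simp
    show "prob_space Q"
      unfolding Q_def by (rule prob_space_distr[OF \<phi>_measurable])
    have "distr Q QX snd = distr QX QX (snd \<circ> \<phi>)"
      unfolding Q_def by (simp add: distr_distr)
    then show "distr Q QX snd = QX" by (simp add: te_\<phi> comp_def distr_id)
    show tf_integrable: "integrable QX tf"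
      using L2_D[OF tf] by (rule square_integrable_imp_integrable)
    show "integrable Q (\<lambda>\<omega>. (te \<omega>)\<^sup>2)"
      unfolding Q_def
      by (subst integrable_distr_eq[OF \<phi>_measurable]) (measurable, simp add: te_\<phi> L2_D[OF tf])
    show "integrable Q te"
      unfolding Q_def
      by (subst integrable_distr_eq[OF \<phi>_measurable]) (measurable, simp add: te_\<phi> tf_integrable)
    fix A assume "A \<in> sets QX"
    then have "snd -` A \<inter> space PX \<in> sets PX"
      by (rule measurable_sets[OF snd_measurable])
    then have "(\<integral>\<omega>. indicator (snd -` A \<inter> space Q) \<omega> * te \<omega> \<partial>Q)
        = (\<integral>x. indicator (snd -` A \<inter> space PX) (\<phi> x) * te (\<phi> x) \<partial>QX)"
      unfolding Q_def by (subst integral_distr[OF \<phi>_measurable]) auto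
    also have "\<dots> = (\<integral>x. indicator A x * tf x \<partial>QX)"
      by (rule Bochner_Integration.integral_cong)
        (auto simp: \<phi>_def te_def indicator_def PX_def space_pair_measure)
    finally show "(\<integral>\<omega>. indicator (snd -` A \<inter> space Q) \<omega> * te \<omega> \<partial>Q) = (\<integral>x. indicator A x * tf x \<partial>QX)" .
  qed measurable
  then show ?thesis by blast
qed

definition mixture :: "real^'n::finite \<Rightarrow> ('n \<Rightarrow> 'x \<Rightarrow> real) \<Rightarrow> 'x \<Rightarrow> real" where
  "mixture w h x = (\<Sum>i\<in>UNIV. w $ i * h i x)"

definition mixture_spread :: "'x measure \<Rightarrow> real^'n::finite \<Rightarrow> ('n \<Rightarrow> 'x \<Rightarrow> real) \<Rightarrow> real" where
  "mixture_spread M w h = (\<Sum>i\<in>UNIV. w $ i * L2_sqdist M (mixture w h) (h i))"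

lemma prob_simplexD:
  assumes "w \<in> prob_simplex"
  shows "0 \<le> w $ i" "(\<Sum>i\<in>UNIV. w $ i) = 1"
  using assms by (simp_all add: prob_simplex_def)

lemma axis_in_prob_simplex: "axis j 1 \<in> prob_simplex"
  by (simp add: prob_simplex_def axis_def)

lemma convex_prob_simplex: "convex prob_simplex"
  by (auto simp: convex_def prob_simplex_def sum.distrib simp flip: sum_distrib_left)

lemma sum_axis_mult: "(\<Sum>i\<in>UNIV. axis j 1 $ i * c i) = (c j :: real)"
proof -
  have "axis j 1 $ i * c i = (if i = j then c j else 0)" for i
    by (simp add: axis_def)
  then show ?thesis by simp
qed

lemma mixture_axis: "mixture (axis j 1) h = h j"
  by (simp add: fun_eq_iff mixture_def sum_axis_mult)

lemma mixture_L2: "(\<And>i. h i \<in> L2 M) \<Longrightarrow> mixture w h \<in> L2 M"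
  unfolding mixture_def[abs_def] by (intro L2_sum L2_cmult)

lemma convex_fun_set_sum:
  assumes F: "convex_fun_set F" and "finite A" "A \<noteq> {}"
    and "\<And>i. i \<in> A \<Longrightarrow> h i \<in> F" "\<And>i. i \<in> A \<Longrightarrow> 0 \<le> w i" "sum w A = 1"
  shows "(\<lambda>x. \<Sum>i\<in>A. w i * h i x) \<in> F"
  using assms(2-)
proof (induction A arbitrary: w rule: finite_ne_induct)
  case (singleton a)
  then show ?case by simp
next
  case (insert a A)
  have rest: "sum w A = 1 - w a" "0 \<le> sum w A"
    using insert by (simp_all add: sum_nonneg)
  show ?case
  proof (cases "w a = 1")
    case True
    then have "\<forall>i\<in>A. w i = 0"
      using rest insert.prems(2) sum_nonneg_eq_0_iff[OF insert.hyps(1)] by auto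
    then show ?thesis using True insert by simp
  next
    case False
    then have s: "0 < 1 - w a" using rest by linarith
    have "(\<lambda>x. \<Sum>i\<in>A. (w i / (1 - w a)) * h i x) \<in> F"
      using insert s rest by (intro insert.IH) (auto simp flip: sum_divide_distrib)
    then have "(\<lambda>x. w a * h a x + (1 - w a) * (\<Sum>i\<in>A. (w i / (1 - w a)) * h i x)) \<in> F"
      using F insert rest unfolding convex_fun_set_def by simp
    then show ?thesis
      using insert s by (simp add: sum_distrib_left)
  qed
qed

lemma convex_fun_set_mixture:
  assumes "convex_fun_set F" "\<And>i. h i \<in> F" "w \<in> prob_simplex"
  shows "mixture w h \<in> F"
  using convex_fun_set_sum[OF assms(1) finite UNIV_not_empty, of h "\<lambda>i. w $ i"] assms(2,3)
  by (simp add: mixture_def[abs_def] prob_simplex_def)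

lemma sum_weighted_square_diff_decomp:
  fixes w h :: "'i \<Rightarrow> real"
  assumes "sum w A = 1"
  defines "c \<equiv> (\<Sum>i\<in>A. w i * h i)"
  shows "(\<Sum>i\<in>A. w i * (f - h i)\<^sup>2) = (f - c)\<^sup>2 + (\<Sum>i\<in>A. w i * (c - h i)\<^sup>2)"
proof -
  have centered: "(\<Sum>i\<in>A. w i * (c - h i)) = 0"
    using assms by (simp add: right_diff_distrib sum_subtractf c_def flip: sum_distrib_right)
  have "(\<Sum>i\<in>A. w i * (f - h i)\<^sup>2)
      = (\<Sum>i\<in>A. w i * (f - c)\<^sup>2 + 2 * (f - c) * (w i * (c - h i)) + w i * (c - h i)\<^sup>2)"
    by (rule sum.cong) (simp_all add: power2_eq_square algebra_simps)
  also have "\<dots> = (\<Sum>i\<in>A. w i) * (f - c)\<^sup>2 + 2 * (f - c) * (\<Sum>i\<in>A. w i * (c - h i))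
      + (\<Sum>i\<in>A. w i * (c - h i)\<^sup>2)"
    by (simp add: sum.distrib sum_distrib_left sum_distrib_right)
  finally show ?thesis
    using centered assms(1) by simp
qed

lemma L2_sqdist_mixture_decomp:
  assumes w: "w \<in> prob_simplex" and h: "\<And>i. h i \<in> L2 M" and f: "f \<in> L2 M"
  shows "(\<Sum>i\<in>UNIV. w $ i * L2_sqdist M f (h i))
    = L2_sqdist M f (mixture w h) + mixture_spread M w h"
proof -
  have mix: "mixture w h \<in> L2 M" by (rule mixture_L2[OF h])
  have int: "integrable M (\<lambda>x. (f x - h i x)\<^sup>2)"
    "integrable M (\<lambda>x. (mixture w h x - h i x)\<^sup>2)" for i
    using L2_D(2)[OF L2_diff[OF f h]] L2_D(2)[OF L2_diff[OF mix h]] by simp_all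
  have pointwise: "(\<Sum>i\<in>UNIV. w $ i * (f x - h i x)\<^sup>2)
      = (f x - mixture w h x)\<^sup>2 + (\<Sum>i\<in>UNIV. w $ i * (mixture w h x - h i x)\<^sup>2)" for x
    unfolding mixture_def using prob_simplexD(2)[OF w] by (rule sum_weighted_square_diff_decomp)
  have "(\<Sum>i\<in>UNIV. w $ i * L2_sqdist M f (h i)) = (\<integral>x. (\<Sum>i\<in>UNIV. w $ i * (f x - h i x)\<^sup>2) \<partial>M)"
    using int by (simp add: L2_sqdist_def)
  also have "\<dots> = (\<integral>x. (f x - mixture w h x)\<^sup>2 + (\<Sum>i\<in>UNIV. w $ i * (mixture w h x - h i x)\<^sup>2) \<partial>M)"
    unfolding pointwise ..
  also have "\<dots> = L2_sqdist M f (mixture w h) + mixture_spread M w h"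
    using int L2_D(2)[OF L2_diff[OF f mix]] by (simp add: L2_sqdist_def mixture_spread_def)
  finally show ?thesis .
qed

lemma mixture_spread_nonneg: "w \<in> prob_simplex \<Longrightarrow> 0 \<le> mixture_spread M w h"
  unfolding mixture_spread_def
  by (intro sum_nonneg mult_nonneg_nonneg prob_simplexD(1) L2_sqdist_nonneg)

lemma sum_prob_simplex_mult_le_Max:
  assumes "w \<in> prob_simplex"
  shows "(\<Sum>i\<in>UNIV. w $ i * c i) \<le> (MAX i. c i)"
proof -
  have "(\<Sum>i\<in>UNIV. w $ i * c i) \<le> (\<Sum>i\<in>UNIV. w $ i * (MAX i. c i))"
    using prob_simplexD(1)[OF assms] by (intro sum_mono mult_left_mono) simp_all
  also have "\<dots> = (MAX i. c i)"
    using prob_simplexD(2)[OF assms] by (simp flip: sum_distrib_right)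
  finally show ?thesis .
qed

lemma mixture_combine:
  "mixture (a *\<^sub>R p + b *\<^sub>R q) h x = a * mixture p h x + b * mixture q h x"
  by (simp add: mixture_def algebra_simps sum.distrib sum_distrib_left)

lemma SUP_L2_sqdist_mixture:
  assumes h: "\<And>i. h i \<in> L2 M" and f: "f \<in> L2 M"
  shows "(SUP w\<in>prob_simplex. L2_sqdist M f (mixture w h)) = (MAX j. L2_sqdist M f (h j))"
proof (rule cSup_eq_maximum)
  have "(MAX j. L2_sqdist M f (h j)) \<in> range (\<lambda>j. L2_sqdist M f (h j))"
    by (rule Max_in) simp_all
  then obtain j where "(MAX j. L2_sqdist M f (h j)) = L2_sqdist M f (h j)"
    by blast
  then show "(MAX j. L2_sqdist M f (h j)) \<in> (\<lambda>w. L2_sqdist M f (mixture w h)) ` prob_simplex"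
    using axis_in_prob_simplex[of j] by (auto simp: mixture_axis intro!: image_eqI)
  fix y assume "y \<in> (\<lambda>w. L2_sqdist M f (mixture w h)) ` prob_simplex"
  then obtain w where w: "w \<in> prob_simplex" and y: "y = L2_sqdist M f (mixture w h)"
    by blast
  show "y \<le> (MAX j. L2_sqdist M f (h j))"
    using L2_sqdist_mixture_decomp[where h=h, OF w h f] mixture_spread_nonneg[OF w, of M h]
      sum_prob_simplex_mult_le_Max[OF w, of "\<lambda>j. L2_sqdist M f (h j)"] y
    by linarith
qed

text \<open>First-order optimality of a maximiser q of the spread, tested against the direction
  of the vertex j: moving weight t towards j changes the spread by
  t (d_j - spread) - t^2 d_j, where d_j is the squared distance of the mixture to h j.\<close>
lemma L2_sqdist_mixture_le_max_spread:
  assumes h: "\<And>i. h i \<in> L2 M" and q: "q \<in> prob_simplex"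
    and max: "\<And>p. p \<in> prob_simplex \<Longrightarrow> mixture_spread M p h \<le> mixture_spread M q h"
  shows "L2_sqdist M (mixture q h) (h j) \<le> mixture_spread M q h"
proof -
  define D where "D = L2_sqdist M (mixture q h) (h j)"
  define V where "V = mixture_spread M q h"
  have step: "D - V \<le> t * D" if t: "0 < t" "t \<le> 1" for t :: real
  proof -
    define qt where "qt = (1 - t) *\<^sub>R q + t *\<^sub>R axis j 1"
    have qt: "qt \<in> prob_simplex"
      unfolding qt_def using t q axis_in_prob_simplex convex_prob_simplex
      by (intro convexD) auto
    have "(\<Sum>i\<in>UNIV. qt $ i * L2_sqdist M (mixture q h) (h i))
        = (1 - t) * (\<Sum>i\<in>UNIV. q $ i * L2_sqdist M (mixture q h) (h i))
          + t * (\<Sum>i\<in>UNIV. axis j 1 $ i * L2_sqdist M (mixture q h) (h i))"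
      by (simp add: qt_def distrib_right sum.distrib sum_distrib_left mult.assoc)
    also have "\<dots> = (1 - t) * V + t * D"
      by (simp add: sum_axis_mult V_def D_def mixture_spread_def)
    moreover have "L2_sqdist M (mixture q h) (mixture qt h) = t\<^sup>2 * D"
    proof -
      have "(mixture q h x - mixture qt h x)\<^sup>2 = t\<^sup>2 * (mixture q h x - h j x)\<^sup>2" for x
        unfolding qt_def mixture_combine mixture_axis by (simp add: power2_eq_square algebra_simps)
      then show ?thesis
        by (simp add: D_def L2_sqdist_def)
    qed
    ultimately have "(1 - t) * V + t * D = t\<^sup>2 * D + mixture_spread M qt h"
      using L2_sqdist_mixture_decomp[where h=h, OF qt h mixture_L2[where h=h, OF h]] by simp
    then have "t * (D - V) \<le> t * (t * D)"
      using max[OF qt] by (simp add: V_def power2_eq_square algebra_simps)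
    then show ?thesis using t by simp
  qed
  show ?thesis
  proof (rule ccontr)
    assume "\<not> ?thesis"
    then have "V < D" by (simp add: D_def V_def)
    moreover have "0 \<le> V" unfolding V_def by (rule mixture_spread_nonneg[OF q])
    ultimately show False
      using step[of "(D - V) / (2 * D)"] by (simp add: field_simps)
  qed
qed

lemma Max_L2_sqdist_mixture_ge:
  assumes h: "\<And>i. h i \<in> L2 M" and q: "q \<in> prob_simplex"
    and max: "\<And>p. p \<in> prob_simplex \<Longrightarrow> mixture_spread M p h \<le> mixture_spread M q h"
    and f: "f \<in> L2 M"
  shows "(MAX j. L2_sqdist M (mixture q h) (h j)) + L2_sqdist M f (mixture q h)
    \<le> (MAX j. L2_sqdist M f (h j))"
proof -
  have "(MAX j. L2_sqdist M (mixture q h) (h j)) \<le> mixture_spread M q h"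
    using L2_sqdist_mixture_le_max_spread[OF h q max] by simp
  moreover have "L2_sqdist M f (mixture q h) + mixture_spread M q h \<le> (MAX j. L2_sqdist M f (h j))"
    using L2_sqdist_mixture_decomp[where h=h, OF q h f]
      sum_prob_simplex_mult_le_Max[OF q, of "\<lambda>j. L2_sqdist M f (h j)"]
    by simp
  ultimately show ?thesis by linarith
qed

lemma mixture_eq_inner_tau_vec: "mixture q tau x = q \<bullet> tau_vec tau x"
  by (simp add: mixture_def inner_vec_def tau_vec_def)

lemma Gmat_mult_vec: "Gmat g *v w = (\<Sum>i\<in>UNIV. w $ i *\<^sub>R g i)"
  by (simp add: vec_eq_iff matrix_vector_mult_def Gmat_def sum_component mult.commute)

lemma Gmat_mult_axis: "Gmat g *v axis i 1 = g i"
  by (simp add: matrix_vector_mult_basis column_def Gmat_def vec_eq_iff)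

lemma mixture_Gmat_mult_vec: "mixture (Gmat g *v w) tau = mixture w (\<lambda>i. mixture (g i) tau)"
proof
  fix x
  have "mixture (Gmat g *v w) tau x = (\<Sum>s\<in>UNIV. \<Sum>i\<in>UNIV. w $ i * (g i $ s * tau s x))"
    by (simp add: mixture_def Gmat_mult_vec sum_component sum_distrib_right mult.assoc)
  also have "\<dots> = mixture w (\<lambda>i. mixture (g i) tau) x"
    by (subst sum.swap) (simp add: mixture_def sum_distrib_left)
  finally show "mixture (Gmat g *v w) tau x = mixture w (\<lambda>i. mixture (g i) tau) x" .
qed

lemma convex_hull_range_eq_Gmat_image:
  fixes g :: "'n::finite \<Rightarrow> real^'s::finite"
  shows "convex hull (range g) = (\<lambda>w. Gmat g *v w) ` prob_simplex"
proof
  have "g i \<in> (\<lambda>w. Gmat g *v w) ` prob_simplex" for i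
    using axis_in_prob_simplex[of i] by (auto simp: Gmat_mult_axis intro!: image_eqI[of _ _ "axis i 1"])
  then have "range g \<subseteq> (\<lambda>w. Gmat g *v w) ` prob_simplex"
    by blast
  moreover have "convex ((\<lambda>w. Gmat g *v w) ` prob_simplex)"
    by (rule convex_linear_image[OF matrix_vector_mul_linear convex_prob_simplex])
  ultimately show "convex hull (range g) \<subseteq> (\<lambda>w. Gmat g *v w) ` prob_simplex"
    by (rule hull_minimal)
  show "(\<lambda>w. Gmat g *v w) ` prob_simplex \<subseteq> convex hull (range g)"
  proof (rule image_subsetI)
    fix w :: "real^'n" assume "w \<in> prob_simplex"
    then show "Gmat g *v w \<in> convex hull (range g)"
      unfolding Gmat_mult_vec
      by (intro convex_sum) (auto simp: prob_simplex_def hull_inc)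
  qed
qed

lemma unc_set_convex_hull:
  "unc_set QX tau (convex hull (range g))
    = {Q. \<exists>w\<in>prob_simplex. has_cate QX Q (mixture w (\<lambda>i. mixture (g i) tau))}"
  by (auto simp: unc_set_def convex_hull_range_eq_Gmat_image mixture_def[abs_def]
      simp flip: mixture_Gmat_mult_vec[unfolded mixture_def[abs_def]])

lemma worst_regret_convex_hull_eq_Max:
  fixes tau :: "'s::finite \<Rightarrow> 'x \<Rightarrow> real" and g :: "'n::finite \<Rightarrow> real^'s"
  assumes "prob_space QX" and FL2: "F \<subseteq> L2 QX" and F: "convex_fun_set F"
    and tau: "\<And>s. tau s \<in> F" and g: "\<And>i. g i \<in> prob_simplex" and f: "f \<in> F"
  shows "worst_regret QX tau (convex hull (range g)) F f = (MAX j. L2_sqdist QX f (mixture (g j) tau))"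
proof -
  define h where "h = (\<lambda>i. mixture (g i) tau)"
  have h_F: "mixture w h \<in> F" if "w \<in> prob_simplex" for w
    unfolding h_def using convex_fun_set_mixture[OF F convex_fun_set_mixture[OF F tau g] that] .
  have h_L2: "h i \<in> L2 QX" for i
    unfolding h_def using FL2 tau by (intro mixture_L2) blast
  have "(\<lambda>Q. regret F Q f) ` unc_set QX tau (convex hull (range g))
      = (\<lambda>w. L2_sqdist QX f (mixture w h)) ` prob_simplex"
  proof (intro equalityI subsetI)
    fix r assume "r \<in> (\<lambda>Q. regret F Q f) ` unc_set QX tau (convex hull (range g))"
    then obtain Q w where "w \<in> prob_simplex" "has_cate QX Q (mixture w h)" "r = regret F Q f"
      unfolding unc_set_convex_hull h_def by blast
    then show "r \<in> (\<lambda>w. L2_sqdist QX f (mixture w h)) ` prob_simplex"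
      using regret_eq_L2_sqdist[OF _ h_F FL2 f] by blast
  next
    fix r assume "r \<in> (\<lambda>w. L2_sqdist QX f (mixture w h)) ` prob_simplex"
    then obtain w where w: "w \<in> prob_simplex" and r: "r = L2_sqdist QX f (mixture w h)"
      by blast
    obtain Q where Q: "has_cate QX Q (mixture w h)"
      using ex_has_cate[OF assms(1) mixture_L2[where h=h, OF h_L2]] by blast
    then have "Q \<in> unc_set QX tau (convex hull (range g))"
      unfolding unc_set_convex_hull h_def using w by blast
    moreover have "r = regret F Q f"
      using regret_eq_L2_sqdist[OF Q h_F[OF w] FL2 f] r by simp
    ultimately show "r \<in> (\<lambda>Q. regret F Q f) ` unc_set QX tau (convex hull (range g))"
      by blast
  qed
  then show ?thesis
    unfolding worst_regret_def using SUP_L2_sqdist_mixture[OF h_L2 subsetD[OF FL2 f]]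
    by (simp add: h_def)
qed

lemma worst_regret_convex_hull_mixture_ge:
  fixes QX :: "'x measure" and F :: "('x \<Rightarrow> real) set"
    and tau :: "'s::finite \<Rightarrow> 'x \<Rightarrow> real" and g :: "'n::finite \<Rightarrow> real^'s"
  defines "h \<equiv> \<lambda>i. mixture (g i) tau" and "R \<equiv> worst_regret QX tau (convex hull (range g)) F"
  assumes "prob_space QX" and FL2: "F \<subseteq> L2 QX" and F: "convex_fun_set F"
    and tau: "\<And>s. tau s \<in> F" and g: "\<And>i. g i \<in> prob_simplex"
    and q: "q \<in> prob_simplex"
    and max: "\<And>p. p \<in> prob_simplex \<Longrightarrow> mixture_spread QX p h \<le> mixture_spread QX q h"
    and f: "f \<in> F"
  shows "R (mixture q h) + L2_sqdist QX f (mixture q h) \<le> R f"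
proof -
  have R_eq: "R f' = (MAX j. L2_sqdist QX f' (h j))" if "f' \<in> F" for f'
    unfolding R_def h_def using assms(3) FL2 F tau g that by (rule worst_regret_convex_hull_eq_Max)
  have "h i \<in> L2 QX" for i
    unfolding h_def using FL2 tau by (intro mixture_L2) blast
  moreover have "mixture q h \<in> F"
    unfolding h_def using F convex_fun_set_mixture[OF F tau g] q by (rule convex_fun_set_mixture)
  ultimately show ?thesis
    using Max_L2_sqdist_mixture_ge[OF _ q max] R_eq f FL2 by auto
qed

lemma Gamma_quadratic_form:
  assumes "\<And>s. tau s \<in> L2 M"
  shows "p \<bullet> (Gamma M tau *v p) = (\<integral>x. (mixture p tau x)\<^sup>2 \<partial>M)"
proof -
  have "p \<bullet> (Gamma M tau *v p)
      = (\<Sum>s\<in>UNIV. \<Sum>k\<in>UNIV. p $ s * p $ k * (\<integral>x. tau s x * tau k x \<partial>M))"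
    by (simp add: inner_vec_def matrix_vector_mult_def Gamma_def sum_distrib_left algebra_simps)
  also have "\<dots> = (\<integral>x. (\<Sum>s\<in>UNIV. \<Sum>k\<in>UNIV. p $ s * p $ k * (tau s x * tau k x)) \<partial>M)"
    using integrable_mult_L2[OF assms assms] by simp
  also have "\<dots> = (\<integral>x. (mixture p tau x)\<^sup>2 \<partial>M)"
    unfolding mixture_def power2_eq_square sum_product by (simp add: algebra_simps)
  finally show ?thesis .
qed

lemma inner_transpose_mult: "x \<bullet> (transpose A *v y) = (A *v x) \<bullet> (y :: real^_)"
  by (metis dot_lmul_matrix vector_transpose_matrix)

lemma Gamma_poly_quadratic_form:
  assumes "\<And>s. tau s \<in> L2 M"
  shows "q \<bullet> (Gamma_poly M tau g *v q) = (\<integral>x. (mixture q (\<lambda>i. mixture (g i) tau) x)\<^sup>2 \<partial>M)"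
proof -
  have "q \<bullet> (Gamma_poly M tau g *v q) = (Gmat g *v q) \<bullet> (Gamma M tau *v (Gmat g *v q))"
    unfolding Gamma_poly_def by (simp only: inner_transpose_mult flip: matrix_vector_mul_assoc)
  then show ?thesis
    by (simp add: Gamma_quadratic_form[OF assms] mixture_Gmat_mult_vec)
qed

lemma inner_d_poly: "q \<bullet> d_poly M tau g = (\<Sum>i\<in>UNIV. q $ i * (\<integral>x. (mixture (g i) tau x)\<^sup>2 \<partial>M))"
  by (simp add: inner_vec_def d_poly_def mixture_eq_inner_tau_vec)

lemma inner_tau_poly: "q \<bullet> tau_poly tau g x = mixture q (\<lambda>i. mixture (g i) tau) x"
  by (simp only: tau_poly_def inner_transpose_mult mixture_Gmat_mult_vec
      flip: mixture_eq_inner_tau_vec)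

lemma poly_objective_eq_neg_spread:
  assumes tau: "\<And>s. tau s \<in> L2 M" and q: "q \<in> prob_simplex"
  shows "q \<bullet> (Gamma_poly M tau g *v q) - q \<bullet> d_poly M tau g
    = - mixture_spread M q (\<lambda>i. mixture (g i) tau)"
  using L2_sqdist_mixture_decomp[where h="\<lambda>i. mixture (g i) tau", OF q mixture_L2[OF tau] L2_const_zero]
  by (simp add: Gamma_poly_quadratic_form[OF tau] inner_d_poly L2_sqdist_def)

theorem corollary1:
  fixes QX :: "'x measure" and tau :: "'s::finite \<Rightarrow> 'x \<Rightarrow> real"
    and g :: "'n::finite \<Rightarrow> real^'s" and F :: "('x \<Rightarrow> real) set"
    and H :: "(real^'s) set" and qstar :: "real^'n"
  assumes "prob_space QX"
    and "inj g" and "\<forall>i. g i \<in> prob_simplex"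
    and "H = convex hull (range g)"
    and "F \<subseteq> L2 QX" and "convex_fun_set F" and "\<forall>s. tau s \<in> F"
    and "qstar \<in> prob_simplex"
    and "\<forall>q\<in>prob_simplex. qstar \<bullet> (Gamma_poly QX tau g *v qstar) - qstar \<bullet> d_poly QX tau g
                     \<le> q \<bullet> (Gamma_poly QX tau g *v q) - q \<bullet> d_poly QX tau g"
  shows "(\<lambda>x. qstar \<bullet> tau_poly tau g x) \<in> F
    \<and> (\<forall>f\<in>F. worst_regret QX tau H F (\<lambda>x. qstar \<bullet> tau_poly tau g x) \<le> worst_regret QX tau H F f)
    \<and> (\<forall>f\<in>F. worst_regret QX tau H F f \<le> worst_regret QX tau H F (\<lambda>x. qstar \<bullet> tau_poly tau g x)
           \<longrightarrow> (AE x in QX. f x = qstar \<bullet> tau_poly tau g x))"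
proof -
  define h where "h = (\<lambda>i. mixture (g i) tau)"
  define R where "R = worst_regret QX tau H F"
  have tau_L2: "tau s \<in> L2 QX" for s
    using assms(5,7) by blast
  have fstar_at: "qstar \<bullet> tau_poly tau g x = mixture qstar h x" for x
    by (simp add: inner_tau_poly h_def)
  have fstar_F: "mixture qstar h \<in> F"
    unfolding h_def using assms(6,7,3,8) by (intro convex_fun_set_mixture) auto
  have spread_max: "mixture_spread QX p h \<le> mixture_spread QX qstar h" if "p \<in> prob_simplex" for p
    using assms(9) that poly_objective_eq_neg_spread[where tau=tau and g=g, OF tau_L2 that]
      poly_objective_eq_neg_spread[where tau=tau and g=g, OF tau_L2 assms(8)]
    by (fastforce simp: h_def)
  then have minimax: "R (mixture qstar h) + L2_sqdist QX f (mixture qstar h) \<le> R f" if "f \<in> F" for f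
    unfolding R_def h_def assms(4) using assms(1,5,6,7,3,8) that
    by (intro worst_regret_convex_hull_mixture_ge) auto
  show ?thesis
    unfolding R_def[symmetric] fstar_at
  proof (intro conjI ballI impI)
    show "mixture qstar h \<in> F" by (rule fstar_F)
  next
    fix f assume "f \<in> F"
    then show "R (mixture qstar h) \<le> R f"
      using minimax L2_sqdist_nonneg[of QX f "mixture qstar h"] by fastforce
  next
    fix f assume f: "f \<in> F" and "R f \<le> R (mixture qstar h)"
    then have "L2_sqdist QX f (mixture qstar h) = 0"
      using minimax[OF f] L2_sqdist_nonneg[of QX f "mixture qstar h"] by linarith
    then show "AE x in QX. f x = mixture qstar h x"
      using f fstar_F assms(5) by (intro AE_eq_if_L2_sqdist_eq_0) auto
  qed
qed

end
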